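(* Let $G=(V,E)$ be a graph on $n$ vertices $v_1,\dots,v_n$ and let $k$ be a positive integer. Let $v\in V$ be such that its neighbourhood $N(v)$ induces a clique of size at most $k-2$. For any choice of positive parameters $(p_1,\dots,p_n)$, the Glauber dynamics $\mathcal{L}_V$ for $k$-colourings of $G$ and the Glauber dynamics $\mathcal{L}_{V\setminus\{v\}}$ for $k$-colourings of $G-v$ (the subgraph induced by $V\setminus\{v\}$), defined with the same parameters, satisfy $\tau(\mathcal{L}_{V\setminus\{v\}})\leq\tau(\mathcal{L}_V)$.
   Context: The continuous-time Glauber dynamics for proper $k$-vertex-colourings of a graph with parameters $(p_i)$ is the chain on the set of proper colourings with rate $p_i$ from $\sigma$ to $\eta$ whenever $\sigma,\eta$ differ exactly at vertex $v_i$, and rate $0$ otherwise. The relaxation time is $\tau=1/\mathrm{Gap}$, where $\mathrm{Gap}$ is the second smallest eigenvalue of minus the generator. *)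

theory Defs
  imports "Jordan_Normal_Form.Char_Poly" "HOL-Computational_Algebra.Polynomial_Factorial"
    "HOL-Library.Extended_Real"
begin

(* Graphs: vertex set W :: nat set, symmetric irreflexive edge relation E.
   Vertex v_i is the natural number i; the graph G has vertex set {0..<n}. *)

definition proper_colourings :: "(nat \<Rightarrow> nat \<Rightarrow> bool) \<Rightarrow> nat set \<Rightarrow> nat \<Rightarrow> (nat \<Rightarrow> nat) set" where
  "proper_colourings E W k =
     {\<sigma>. (\<forall>x\<in>W. \<sigma> x < k) \<and> (\<forall>x. x \<notin> W \<longrightarrow> \<sigma> x = 0)
          \<and> (\<forall>x\<in>W. \<forall>y\<in>W. E x y \<longrightarrow> \<sigma> x \<noteq> \<sigma> y)}"

definition glauber_rate :: "(nat \<Rightarrow> real) \<Rightarrow> nat set \<Rightarrow> (nat \<Rightarrow> nat) \<Rightarrow> (nat \<Rightarrow> nat) \<Rightarrow> real" where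
  "glauber_rate p W \<sigma> \<eta> =
     (if \<exists>x\<in>W. {y. \<sigma> y \<noteq> \<eta> y} = {x} then p (THE x. {y. \<sigma> y \<noteq> \<eta> y} = {x}) else 0)"

definition glauber_generator :: "(nat \<Rightarrow> nat \<Rightarrow> bool) \<Rightarrow> nat set \<Rightarrow> nat \<Rightarrow> (nat \<Rightarrow> real)
     \<Rightarrow> (nat \<Rightarrow> nat) \<Rightarrow> (nat \<Rightarrow> nat) \<Rightarrow> real" where
  "glauber_generator E W k p \<sigma> \<eta> =
     (if \<sigma> = \<eta> then - (\<Sum>\<zeta>\<in>proper_colourings E W k - {\<sigma>}. glauber_rate p W \<sigma> \<zeta>)
      else glauber_rate p W \<sigma> \<eta>)"

definition state_list :: "(nat \<Rightarrow> nat \<Rightarrow> bool) \<Rightarrow> nat set \<Rightarrow> nat \<Rightarrow> (nat \<Rightarrow> nat) list" where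
  "state_list E W k = (SOME xs. distinct xs \<and> set xs = proper_colourings E W k)"

definition minus_generator_mat :: "(nat \<Rightarrow> nat \<Rightarrow> bool) \<Rightarrow> nat set \<Rightarrow> nat \<Rightarrow> (nat \<Rightarrow> real) \<Rightarrow> real mat" where
  "minus_generator_mat E W k p =
     (let xs = state_list E W k
      in mat (length xs) (length xs) (\<lambda>(i, j). - glauber_generator E W k p (xs ! i) (xs ! j)))"

(* eigenvalues with multiplicity, in increasing order
   (the matrix is real symmetric, so all roots of its characteristic polynomial are real) *)
definition sorted_eigenvalues :: "real mat \<Rightarrow> real list" where
  "sorted_eigenvalues A = sorted_list_of_multiset (proots (char_poly A))"

definition glauber_gap :: "(nat \<Rightarrow> nat \<Rightarrow> bool) \<Rightarrow> nat set \<Rightarrow> nat \<Rightarrow> (nat \<Rightarrow> real) \<Rightarrow> real" where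
  "glauber_gap E W k p = sorted_eigenvalues (minus_generator_mat E W k p) ! 1"

definition relaxation_time :: "(nat \<Rightarrow> nat \<Rightarrow> bool) \<Rightarrow> nat set \<Rightarrow> nat \<Rightarrow> (nat \<Rightarrow> real) \<Rightarrow> ereal" where
  "relaxation_time E W k p =
     (if card (proper_colourings E W k) < 2 then 0
      else if glauber_gap E W k p = 0 then \<infinity>
      else ereal (1 / glauber_gap E W k p))"

definition neighbourhood :: "(nat \<Rightarrow> nat \<Rightarrow> bool) \<Rightarrow> nat set \<Rightarrow> nat \<Rightarrow> nat set" where
  "neighbourhood E W v = {u\<in>W. E v u}"

definition is_clique :: "(nat \<Rightarrow> nat \<Rightarrow> bool) \<Rightarrow> nat set \<Rightarrow> bool" where
  "is_clique E C = (\<forall>a\<in>C. \<forall>b\<in>C. a \<noteq> b \<longrightarrow> E a b)"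

end

theory Submission
  imports Defs "Jordan_Normal_Form.Schur_Decomposition"
begin

(* Minus the generator is a real symmetric positive semidefinite matrix whose
   quadratic form is the Dirichlet form D(h) = 1/2 \<Sum> r(\<sigma>,\<eta>) (h \<sigma> - h \<eta>)^2 and which kills
   the constant vector; by the spectral theorem its second smallest eigenvalue is the minimum of
   D(h) / \<Sum> h^2 over h orthogonal to the constants.  Take an optimal h for G - v and lift it
   to F = h \<circ> (forget the colour of v).  Because N(v) is a clique, every colouring of G - v has
   exactly c = k - |N(v)| > 0 extensions, so F is again orthogonal to the constants and
   \<Sum> F^2 = c \<Sum> h^2.  A move of the larger chain either recolours v, which costs nothing in
   D(F), or recolours some other vertex, and then it projects to a move of the smaller chain
   with the same rate; hence D(F) <= c D(h) and Gap(G) <= Gap(G - v). *)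

section \<open>Orthogonal diagonalisation of real symmetric matrices\<close>

lemma real_symmetric_hermitian_form_real:
  fixes A :: "real mat" and w :: "complex vec"
  assumes A: "A \<in> carrier_mat n n" and sym: "transpose_mat A = A"
  defines "s \<equiv> \<Sum>i<n. cnj (w $ i) * (\<Sum>j<n. of_real (A $$ (i, j)) * w $ j)"
  shows "cnj s = s"
proof -
  have symA: "A $$ (i, j) = A $$ (j, i)" if "i < n" "j < n" for i j
    using sym that A by (metis carrier_matD index_transpose_mat(1))
  have "cnj s = (\<Sum>i<n. \<Sum>j<n. w $ i * of_real (A $$ (i, j)) * cnj (w $ j))"
    unfolding s_def by (simp add: sum_distrib_left mult.assoc)
  also have "\<dots> = (\<Sum>j<n. \<Sum>i<n. w $ i * of_real (A $$ (i, j)) * cnj (w $ j))"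
    by (rule sum.swap)
  also have "\<dots> = s"
    unfolding s_def sum_distrib_left
    by (intro sum.cong refl) (simp add: symA mult.commute mult.left_commute)
  finally show ?thesis .
qed

lemma real_symmetric_eigenvalue_real:
  fixes A :: "real mat"
  assumes A: "A \<in> carrier_mat n n" and sym: "transpose_mat A = A"
    and root: "poly (char_poly (map_mat complex_of_real A)) z = 0"
  shows "z \<in> \<real>"
proof -
  let ?A = "map_mat complex_of_real A"
  have "eigenvalue ?A z" using eigenvalue_root_char_poly[of ?A n] A root by simp
  then obtain w where "eigenvector ?A w z" unfolding eigenvalue_def by blast
  hence w: "w \<in> carrier_vec n" and w0: "w \<noteq> 0\<^sub>v n" and Aw: "?A *\<^sub>v w = z \<cdot>\<^sub>v w"
    using A unfolding eigenvector_def by auto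
  have row: "(\<Sum>j<n. of_real (A $$ (i, j)) * w $ j) = z * w $ i" if i: "i < n" for i
  proof -
    have "(?A *\<^sub>v w) $ i = (\<Sum>j<n. of_real (A $$ (i, j)) * w $ j)"
      using i A w by (auto simp: scalar_prod_def row_def lessThan_atLeast0 intro!: sum.cong)
    thus ?thesis using Aw i w by simp
  qed
  \<comment> \<open>the Hermitian form \<open>w\<^sup>* A w\<close> is real and equals \<open>z \<parallel>w\<parallel>\<^sup>2\<close>\<close>
  define t where "t = (\<Sum>i<n. cnj (w $ i) * w $ i)"
  have t_eq: "t = of_real (\<Sum>i<n. (cmod (w $ i))\<^sup>2)"
    unfolding t_def of_real_sum by (intro sum.cong refl) (simp only: complex_norm_square mult.commute)
  have "t \<noteq> 0"
  proof
    assume "t = 0"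
    hence "(\<Sum>i<n. (cmod (w $ i))\<^sup>2) = 0" unfolding t_eq of_real_eq_0_iff .
    hence "\<forall>i\<in>{..<n}. (cmod (w $ i))\<^sup>2 = 0" by (subst (asm) sum_nonneg_eq_0_iff) auto
    hence "w = 0\<^sub>v n" using w by (intro eq_vecI) auto
    thus False using w0 by simp
  qed
  moreover have "(\<Sum>i<n. cnj (w $ i) * (\<Sum>j<n. of_real (A $$ (i, j)) * w $ j)) = z * t"
    unfolding t_def using row by (simp add: sum_distrib_left mult.commute mult.left_commute)
  hence "cnj z * t = z * t"
    using real_symmetric_hermitian_form_real[OF A sym, of w] t_eq
    by (metis complex_cnj_mult complex_cnj_complex_of_real)
  ultimately have "cnj z = z" by simp
  thus ?thesis using Reals_cnj_iff by metis
qed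

lemma real_symmetric_char_poly_splits:
  fixes A :: "real mat"
  assumes A: "A \<in> carrier_mat n n" and sym: "transpose_mat A = A"
  obtains es where "char_poly A = (\<Prod>e\<leftarrow>es. [:-e, 1:])"
proof -
  interpret of_real: map_poly_inj_idom_hom "of_real :: real \<Rightarrow> complex" ..
  define pc where "pc = map_poly complex_of_real (char_poly A)"
  have pc: "pc = char_poly (map_mat complex_of_real A)"
    unfolding pc_def using of_real_hom.char_poly_hom[OF A] by metis
  have "lead_coeff pc = 1"
    using degree_monic_char_poly[of "map_mat complex_of_real A" n] A unfolding pc by auto
  moreover obtain rs where rs: "mset rs = proots pc" using ex_mset by blast
  ultimately have pc_rs: "pc = (\<Prod>x\<leftarrow>rs. [:-x, 1:])"
    using complex_poly_decompose_multiset[of pc] by (simp add: prod_mset_prod_list[symmetric] rs[symmetric])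
  have rs_real: "of_real (Re x) = x" if "x \<in> set rs" for x
  proof -
    have "poly pc x = 0" unfolding pc_rs poly_prod_list using that
      by (auto simp: prod_list_zero_iff)
    hence "x \<in> \<real>" using real_symmetric_eigenvalue_real[OF A sym] unfolding pc by blast
    thus ?thesis by (simp add: complex_is_Real_iff complex_eq_iff)
  qed
  have "map_poly complex_of_real (\<Prod>e\<leftarrow>map Re rs. [:-e, 1:]) = (\<Prod>x\<leftarrow>rs. [:-x, 1:])"
    by (simp add: of_real.hom_prod_list o_def) (metis (no_types, lifting) map_eq_conv rs_real)
  also have "\<dots> = map_poly complex_of_real (char_poly A)" using pc_rs pc_def by simp
  finally have "char_poly A = (\<Prod>e\<leftarrow>map Re rs. [:-e, 1:])" by (simp add: of_real.eq_iff)
  thus thesis by (rule that)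
qed

lemma real_sprod_self_nonneg: "0 \<le> (v :: real vec) \<bullet> v"
  using conjugate_square_ge_0_vec[of v] by simp

lemma real_sprod_self_pos_iff:
  "(v :: real vec) \<in> carrier_vec n \<Longrightarrow> 0 < v \<bullet> v \<longleftrightarrow> v \<noteq> 0\<^sub>v n"
  using conjugate_square_greater_0_vec[of v n] by simp

lemma sprod_self_eq_sum_squares:
  "(v :: real vec) \<in> carrier_vec n \<Longrightarrow> v \<bullet> v = (\<Sum>i<n. (v $ i)\<^sup>2)"
  by (simp add: scalar_prod_def power2_eq_square lessThan_atLeast0)

lemma orthogonal_basis_extension:
  fixes v :: "real vec"
  assumes v: "v \<in> carrier_vec n" and v0: "v \<noteq> 0\<^sub>v n"
  obtains ws where "set ws \<subseteq> carrier_vec n" "corthogonal ws" "length ws = n" "ws ! 0 = v"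
proof -
  have n: "0 < n"
  proof (rule ccontr)
    assume "\<not> 0 < n"
    hence "v = 0\<^sub>v n" using v by (intro eq_vecI) auto
    thus False using v0 by simp
  qed
  interpret cof_vec_space n "TYPE(real)" .
  obtain b where b: "b = basis_completion v" by simp
  from basis_completion[OF v v0, folded b]
  have "distinct b" "\<not> lin_dep (set b)" "set b \<subseteq> carrier_vec n" "hd b = v" "length b = n" by auto
  thus thesis
    using that gram_schmidt_result[OF _ _ _ refl] gram_schmidt_hd[OF v] n
    by (metis hd_conv_nth list.collapse list.size(3) not_gr0)
qed

lemma orthonormal_basis_extension:
  fixes v :: "real vec"
  assumes v: "v \<in> carrier_vec n" and vv: "v \<bullet> v = 1"
  obtains W where "W \<in> carrier_mat n n" "transpose_mat W * W = 1\<^sub>m n" "col W 0 = v"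
proof -
  have "v \<noteq> 0\<^sub>v n" using vv v by auto
  then obtain ws where ws: "set ws \<subseteq> carrier_vec n" "corthogonal ws" "length ws = n" "ws ! 0 = v"
    using orthogonal_basis_extension[OF v] by blast
  define us where "us = map (\<lambda>w. (1 / sqrt (w \<bullet> w)) \<cdot>\<^sub>v w) ws"
  have ws_carrier: "ws ! i \<in> carrier_vec n" if "i < n" for i using ws that by auto
  have ws_orth: "ws ! i \<bullet> ws ! j = 0 \<longleftrightarrow> i \<noteq> j" if "i < n" "j < n" for i j
    using corthogonalD[OF ws(2)] that ws(3) by simp
  have ws_pos: "ws ! i \<bullet> ws ! i > 0" if "i < n" for i
    using ws_orth[OF that that] real_sprod_self_nonneg[of "ws ! i"] by linarith
  have us_orth: "us ! i \<bullet> us ! j = (if i = j then 1 else 0)" if "i < n" "j < n" for i j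
    using that ws_orth[OF that] ws_pos[of i] ws_carrier[of i] ws_carrier[of j] ws(3)
    by (auto simp: us_def real_sqrt_mult[symmetric])
  define W where "W = mat_of_cols n us"
  have W: "W \<in> carrier_mat n n" using ws(3) mat_of_cols_carrier(1)[of n us] by (simp add: W_def us_def)
  have col_W: "col W i = us ! i" if "i < n" for i
    unfolding W_def using that ws(3) ws_carrier by (simp add: us_def)
  show thesis
  proof
    show "W \<in> carrier_mat n n" by (rule W)
    show "transpose_mat W * W = 1\<^sub>m n"
      by (rule eq_matI) (use W in \<open>auto simp: col_W us_orth\<close>)
    show "col W 0 = v"
      using ws(3,4) vv \<open>v \<noteq> 0\<^sub>v n\<close> v by (cases n) (auto simp: col_W us_def)
  qed
qed

lemma symmetric_eigenvector_deflation:
  fixes A W :: "real mat"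
  assumes A: "A \<in> carrier_mat n n" and sym: "transpose_mat A = A"
    and W: "W \<in> carrier_mat n n" and WW: "transpose_mat W * W = 1\<^sub>m n"
    and n: "0 < n" and eigen: "A *\<^sub>v col W 0 = e \<cdot>\<^sub>v col W 0"
  obtains B where "B \<in> carrier_mat (n - 1) (n - 1)" "transpose_mat B = B"
    "transpose_mat W * A * W = four_block_mat (mat 1 1 (\<lambda>_. e)) (0\<^sub>m 1 (n - 1)) (0\<^sub>m (n - 1) 1) B"
proof -
  define A' where "A' = transpose_mat W * A * W"
  have A': "A' \<in> carrier_mat n n" unfolding A'_def using W A by auto
  have A'_entry: "A' $$ (i, j) = col W i \<bullet> (A *\<^sub>v col W j)" if "i < n" "j < n" for i j
  proof -
    have "A' = transpose_mat W * (A * W)" unfolding A'_def using W A by (intro assoc_mult_mat) auto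
    thus ?thesis using W A that by (simp add: col_mult2[of _ n n] mult_mat_vec_def)
  qed
  have col_orth: "col W i \<bullet> col W j = (if i = j then 1 else 0)" if "i < n" "j < n" for i j
    using arg_cong[OF WW, of "\<lambda>M. M $$ (i, j)"] W that by simp
  have A'_sym: "A' $$ (i, j) = A' $$ (j, i)" if i: "i < n" and j: "j < n" for i j
  proof -
    have ci: "col W i \<in> carrier_vec n" and cj: "col W j \<in> carrier_vec n" using W i j by auto
    have "col W i \<bullet> (A *\<^sub>v col W j) = (transpose_mat A *\<^sub>v col W i) \<bullet> col W j"
      using transpose_vec_mult_scalar[OF A cj ci] by simp
    also have "\<dots> = col W j \<bullet> (A *\<^sub>v col W i)"
      using sym comm_scalar_prod[OF _ cj] A ci by (metis mult_mat_vec_carrier)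
    finally show ?thesis using A'_entry i j by simp
  qed
  have A'_col0: "A' $$ (i, 0) = (if i = 0 then e else 0)" if i: "i < n" for i
    using A'_entry[OF i n] col_orth[OF i n] W i by (simp add: eigen)
  define B where "B = mat (n - 1) (n - 1) (\<lambda>(i, j). A' $$ (Suc i, Suc j))"
  show thesis
  proof
    show B: "B \<in> carrier_mat (n - 1) (n - 1)" unfolding B_def by simp
    show "transpose_mat B = B" unfolding B_def using A'_sym by (intro eq_matI) auto
    show "transpose_mat W * A * W = four_block_mat (mat 1 1 (\<lambda>_. e)) (0\<^sub>m 1 (n - 1)) (0\<^sub>m (n - 1) 1) B"
      unfolding A'_def[symmetric]
    proof (rule eq_matI)
      fix i j assume "i < dim_row (four_block_mat (mat 1 1 (\<lambda>_. e)) (0\<^sub>m 1 (n - 1)) (0\<^sub>m (n - 1) 1) B)"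
        "j < dim_col (four_block_mat (mat 1 1 (\<lambda>_. e)) (0\<^sub>m 1 (n - 1)) (0\<^sub>m (n - 1) 1) B)"
      hence "i < n" "j < n" using n B by auto
      thus "A' $$ (i, j) = four_block_mat (mat 1 1 (\<lambda>_. e)) (0\<^sub>m 1 (n - 1)) (0\<^sub>m (n - 1) 1) B $$ (i, j)"
        using n B A'_col0 A'_sym[of 0 j] unfolding B_def by (cases i; cases j) auto
    qed (use A' B n in auto)
  qed
qed

lemma orthogonal_block_conjugation:
  fixes U B :: "real mat"
  assumes U: "U \<in> carrier_mat m m" and UU: "transpose_mat U * U = 1\<^sub>m m"
    and B: "B \<in> carrier_mat m m"
  defines "P \<equiv> four_block_mat (1\<^sub>m 1) (0\<^sub>m 1 m) (0\<^sub>m m 1) U"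
  shows "transpose_mat P * P = 1\<^sub>m (Suc m)"
    and "transpose_mat P * four_block_mat (mat 1 1 (\<lambda>_. e)) (0\<^sub>m 1 m) (0\<^sub>m m 1) B * P
         = four_block_mat (mat 1 1 (\<lambda>_. e)) (0\<^sub>m 1 m) (0\<^sub>m m 1) (transpose_mat U * B * U)"
proof -
  have P_T: "transpose_mat P = four_block_mat (1\<^sub>m 1) (0\<^sub>m 1 m) (0\<^sub>m m 1) (transpose_mat U)"
    unfolding P_def by (subst transpose_four_block_mat) (use U in auto)
  note block_mult = mult_four_block_mat[where ?nr1.0 = 1 and ?n1.0 = 1 and ?nc1.0 = 1
      and ?nr2.0 = m and ?n2.0 = m and ?nc2.0 = m]
  show "transpose_mat P * P = 1\<^sub>m (Suc m)"
    unfolding P_T unfolding P_def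
    by (subst block_mult) (use U UU in \<open>auto simp: four_block_one_mat[of 1 m, simplified]\<close>)
  have left: "transpose_mat P * four_block_mat (mat 1 1 (\<lambda>_. e)) (0\<^sub>m 1 m) (0\<^sub>m m 1) B
      = four_block_mat (mat 1 1 (\<lambda>_. e)) (0\<^sub>m 1 m) (0\<^sub>m m 1) (transpose_mat U * B)"
    unfolding P_T by (subst block_mult) (use U B in auto)
  show "transpose_mat P * four_block_mat (mat 1 1 (\<lambda>_. e)) (0\<^sub>m 1 m) (0\<^sub>m m 1) B * P
      = four_block_mat (mat 1 1 (\<lambda>_. e)) (0\<^sub>m 1 m) (0\<^sub>m m 1) (transpose_mat U * B * U)"
    unfolding left unfolding P_def by (subst block_mult) (use U B in auto)
qed

lemma real_unit_eigenvector:
  fixes A :: "real mat"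
  assumes A: "A \<in> carrier_mat n n" and "eigenvalue A e"
  obtains v where "v \<in> carrier_vec n" "v \<bullet> v = 1" "A *\<^sub>v v = e \<cdot>\<^sub>v v"
proof -
  obtain w where "eigenvector A w e" using assms(2) unfolding eigenvalue_def by blast
  hence w: "w \<in> carrier_vec n" "w \<noteq> 0\<^sub>v n" and Aw: "A *\<^sub>v w = e \<cdot>\<^sub>v w"
    using A unfolding eigenvector_def by auto
  show thesis
  proof
    show "(1 / sqrt (w \<bullet> w)) \<cdot>\<^sub>v w \<in> carrier_vec n" using w by simp
    show "((1 / sqrt (w \<bullet> w)) \<cdot>\<^sub>v w) \<bullet> ((1 / sqrt (w \<bullet> w)) \<cdot>\<^sub>v w) = 1"
      using w real_sprod_self_pos_iff[OF w(1)] by (simp add: real_sqrt_mult[symmetric])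
    show "A *\<^sub>v ((1 / sqrt (w \<bullet> w)) \<cdot>\<^sub>v w) = e \<cdot>\<^sub>v ((1 / sqrt (w \<bullet> w)) \<cdot>\<^sub>v w)"
      using A w Aw by (simp add: mult_mat_vec smult_smult_assoc mult.commute)
  qed
qed

lemma orthogonal_conj_char_poly:
  fixes A W :: "real mat"
  assumes A: "A \<in> carrier_mat n n" and W: "W \<in> carrier_mat n n" and WW: "transpose_mat W * W = 1\<^sub>m n"
  shows "char_poly (transpose_mat W * A * W) = char_poly A"
proof (rule char_poly_similar)
  have "W * transpose_mat W = 1\<^sub>m n" using mat_mult_left_right_inverse[OF _ W WW] W by auto
  hence "similar_mat_wit (transpose_mat W * A * W) A (transpose_mat W) W"
    unfolding similar_mat_wit_def Let_def using A W WW by auto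
  thus "similar_mat (transpose_mat W * A * W) A" unfolding similar_mat_def by blast
qed

lemma orthogonal_mult:
  fixes A W P :: "real mat"
  assumes A: "A \<in> carrier_mat n n" and W: "W \<in> carrier_mat n n" and P: "P \<in> carrier_mat n n"
    and WW: "transpose_mat W * W = 1\<^sub>m n" and PP: "transpose_mat P * P = 1\<^sub>m n"
  shows "transpose_mat (W * P) * (W * P) = 1\<^sub>m n"
    and "transpose_mat (W * P) * A * (W * P) = transpose_mat P * (transpose_mat W * A * W) * P"
proof -
  have T: "transpose_mat (W * P) = transpose_mat P * transpose_mat W" by (rule transpose_mult[OF W P])
  have "transpose_mat (W * P) * (W * P) = transpose_mat P * (transpose_mat W * W) * P"
    unfolding T using W P by (simp add: assoc_mult_mat[of _ n n _ n _ n])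
  thus "transpose_mat (W * P) * (W * P) = 1\<^sub>m n" using WW PP P by simp
  show "transpose_mat (W * P) * A * (W * P) = transpose_mat P * (transpose_mat W * A * W) * P"
    unfolding T using W P A by (simp add: assoc_mult_mat[of _ n n _ n _ n])
qed

theorem real_symmetric_orthogonal_diagonalisation:
  fixes A :: "real mat"
  assumes "A \<in> carrier_mat n n" and "transpose_mat A = A"
    and "char_poly A = (\<Prod>e\<leftarrow>es. [:-e, 1:])"
  shows "\<exists>U \<in> carrier_mat n n. transpose_mat U * U = 1\<^sub>m n \<and>
           transpose_mat U * A * U = mat_diag n (\<lambda>i. es ! i)"
  using assms
proof (induction es arbitrary: n A)
  case Nil
  hence "n = 0" using degree_monic_char_poly[OF Nil(1)] by simp
  thus ?case using Nil(1) by (intro bexI[of _ "1\<^sub>m 0"]) (auto intro!: eq_matI simp: mat_diag_def)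
next
  case (Cons e es n A)
  note A = Cons(2) and sym = Cons(3) and cp = Cons(4)
  have "degree (char_poly A) \<noteq> 0" unfolding cp
    by (subst degree_prod_list_eq) (auto simp: prod_list_zero_iff)
  hence n: "0 < n" using degree_monic_char_poly[OF A] by auto
  have "eigenvalue A e" unfolding eigenvalue_root_char_poly[OF A] cp by simp
  then obtain v where v: "v \<in> carrier_vec n" "v \<bullet> v = 1" and Av: "A *\<^sub>v v = e \<cdot>\<^sub>v v"
    using real_unit_eigenvector[OF A] by blast
  obtain W where W: "W \<in> carrier_mat n n" "transpose_mat W * W = 1\<^sub>m n" "col W 0 = v"
    using orthonormal_basis_extension[OF v] .
  obtain B where B: "B \<in> carrier_mat (n - 1) (n - 1)" "transpose_mat B = B"
    and WAW: "transpose_mat W * A * W = four_block_mat (mat 1 1 (\<lambda>_. e)) (0\<^sub>m 1 (n - 1)) (0\<^sub>m (n - 1) 1) B"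
    using symmetric_eigenvector_deflation[OF A sym W(1,2) n] Av W(3) by metis
  have "[:-e, 1:] * char_poly B = [:-e, 1:] * (\<Prod>e\<leftarrow>es. [:-e, 1:])"
    using orthogonal_conj_char_poly[OF A W(1,2)] B(1) unfolding WAW cp
    by (subst (asm) char_poly_four_block_zeros_col) (auto simp: char_poly_defs det_def sign_def)
  hence "char_poly B = (\<Prod>e\<leftarrow>es. [:-e, 1:])" by (subst (asm) mult_cancel_left) simp
  then obtain U' where U': "U' \<in> carrier_mat (n - 1) (n - 1)" "transpose_mat U' * U' = 1\<^sub>m (n - 1)"
    and U'BU': "transpose_mat U' * B * U' = mat_diag (n - 1) (\<lambda>i. es ! i)"
    using Cons.IH[OF B(1,2)] by blast
  define P where "P = four_block_mat (1\<^sub>m 1) (0\<^sub>m 1 (n - 1)) (0\<^sub>m (n - 1) 1) U'"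
  have P: "P \<in> carrier_mat n n" using U' n by (auto simp: P_def)
  have PP: "transpose_mat P * P = 1\<^sub>m n" and PBP: "transpose_mat P * (transpose_mat W * A * W) * P
      = four_block_mat (mat 1 1 (\<lambda>_. e)) (0\<^sub>m 1 (n - 1)) (0\<^sub>m (n - 1) 1) (mat_diag (n - 1) (\<lambda>i. es ! i))"
    using orthogonal_block_conjugation[OF U' B(1)] n unfolding WAW U'BU' P_def by auto
  moreover have "four_block_mat (mat 1 1 (\<lambda>_. e)) (0\<^sub>m 1 (n - 1)) (0\<^sub>m (n - 1) 1) (mat_diag (n - 1) (\<lambda>i. es ! i))
      = mat_diag n (\<lambda>i. (e # es) ! i)"
    by (rule eq_matI) (use n in \<open>auto simp: mat_diag_def nth_Cons'\<close>)
  ultimately show ?case using W(1) P orthogonal_mult[OF A W(1) P W(2) PP] by auto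
qed

section \<open>The second smallest eigenvalue of a symmetric matrix\<close>

lemma proots_linear_factors: "proots (\<Prod>e\<leftarrow>es. [:-e, 1:]) = mset (es :: 'a :: idom list)"
proof (induction es)
  case (Cons a es)
  have "proots ([:-a, 1:] * (\<Prod>e\<leftarrow>es. [:-e, 1:])) = proots [:-a, 1:] + proots (\<Prod>e\<leftarrow>es. [:-e, 1:])"
    by (rule proots_mult) (auto simp: prod_list_zero_iff)
  thus ?case using Cons proots_linear_factor[of "-a"] by simp
qed simp

locale sorted_spectral_decomposition =
  fixes M U :: "real mat" and es :: "real list" and n :: nat
  assumes U: "U \<in> carrier_mat n n"
    and orthogonal: "transpose_mat U * U = 1\<^sub>m n"
    and orthogonal': "U * transpose_mat U = 1\<^sub>m n"
    and decomposition: "M = U * mat_diag n (\<lambda>i. es ! i) * transpose_mat U"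
    and sorted: "sorted es"
    and length: "length es = n"

lemma sorted_eigenvalues_spectral_decomposition:
  fixes M :: "real mat"
  assumes M: "M \<in> carrier_mat n n" and sym: "transpose_mat M = M"
  obtains U where "sorted_spectral_decomposition M U (sorted_eigenvalues M) n"
proof -
  obtain es0 where "char_poly M = (\<Prod>e\<leftarrow>es0. [:-e, 1:])"
    using real_symmetric_char_poly_splits[OF M sym] .
  moreover have "(\<Prod>e\<leftarrow>sort es0. [:-e, 1:]) = (\<Prod>e\<leftarrow>es0. [:-e, 1:])"
    by (simp only: prod_mset_prod_list[symmetric] mset_map mset_sort)
  ultimately have cp: "char_poly M = (\<Prod>e\<leftarrow>sorted_eigenvalues M. [:-e, 1:])"
    unfolding sorted_eigenvalues_def by (simp add: proots_linear_factors)
  then obtain U where U: "U \<in> carrier_mat n n" "transpose_mat U * U = 1\<^sub>m n"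
    and UMU: "transpose_mat U * M * U = mat_diag n (\<lambda>i. sorted_eigenvalues M ! i)"
    using real_symmetric_orthogonal_diagonalisation[OF M sym] by blast
  have UU': "U * transpose_mat U = 1\<^sub>m n"
    using mat_mult_left_right_inverse[OF _ U] U by auto
  have "U * mat_diag n (\<lambda>i. sorted_eigenvalues M ! i) * transpose_mat U
      = (U * transpose_mat U) * M * (U * transpose_mat U)"
    unfolding UMU[symmetric] using U M by (simp add: assoc_mult_mat[of _ n n _ n _ n])
  hence "M = U * mat_diag n (\<lambda>i. sorted_eigenvalues M ! i) * transpose_mat U"
    unfolding UU' using M by simp
  moreover have "length (sorted_eigenvalues M) = n"
    using degree_monic_char_poly[OF M] unfolding cp degree_linear_factors by simp
  ultimately show thesis
    using U UU' by (intro that) (unfold_locales, auto simp: sorted_eigenvalues_def)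
qed

context sorted_spectral_decomposition
begin

lemma coords_carrier: "x \<in> carrier_vec n \<Longrightarrow> transpose_mat U *\<^sub>v x \<in> carrier_vec n"
  using U by simp

lemma coords_inverse: "y \<in> carrier_vec n \<Longrightarrow> transpose_mat U *\<^sub>v (U *\<^sub>v y) = y"
  using U orthogonal by (simp add: assoc_mult_mat_vec[symmetric, of _ n n _ n])

lemma coords_sprod:
  assumes x: "x \<in> carrier_vec n" and z: "z \<in> carrier_vec n"
  shows "(transpose_mat U *\<^sub>v x) \<bullet> (transpose_mat U *\<^sub>v z) = x \<bullet> z"
proof -
  have "(transpose_mat U *\<^sub>v x) \<bullet> (transpose_mat U *\<^sub>v z) = x \<bullet> ((U * transpose_mat U) *\<^sub>v z)"
    using transpose_vec_mult_scalar[OF U coords_carrier[OF z] x] U z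
    by (simp add: assoc_mult_mat_vec[of _ n n _ n])
  thus ?thesis using orthogonal' z by simp
qed

lemma sprod_self_coords:
  "x \<in> carrier_vec n \<Longrightarrow> x \<bullet> x = (\<Sum>i<n. ((transpose_mat U *\<^sub>v x) $ i)\<^sup>2)"
  using coords_sprod[of x x] sprod_self_eq_sum_squares[OF coords_carrier[of x]] by simp

lemma quadratic_form_coords:
  assumes x: "x \<in> carrier_vec n"
  shows "x \<bullet> (M *\<^sub>v x) = (\<Sum>i<n. es ! i * ((transpose_mat U *\<^sub>v x) $ i)\<^sup>2)"
proof -
  define y where "y = transpose_mat U *\<^sub>v x"
  have y: "y \<in> carrier_vec n" unfolding y_def using coords_carrier[OF x] .
  have Dy: "mat_diag n (\<lambda>i. es ! i) *\<^sub>v y = vec n (\<lambda>i. es ! i * y $ i)"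
    using y by (intro eq_vecI) (auto simp: mat_diag_def scalar_prod_def sum.remove[of _ i for i])
  have "M *\<^sub>v x = U *\<^sub>v (mat_diag n (\<lambda>i. es ! i) *\<^sub>v y)"
    unfolding decomposition y_def using U x
    by (simp add: assoc_mult_mat_vec[of _ n n _ n] mult_carrier_mat[of _ n n _ n])
  moreover have "mat_diag n (\<lambda>i. es ! i) *\<^sub>v y \<in> carrier_vec n" by (simp add: Dy)
  ultimately have "x \<bullet> (M *\<^sub>v x) = y \<bullet> (mat_diag n (\<lambda>i. es ! i) *\<^sub>v y)"
    using transpose_vec_mult_scalar[OF U _ x] unfolding y_def by simp
  also have "\<dots> = (\<Sum>i<n. es ! i * (y $ i)\<^sup>2)"
    unfolding Dy scalar_prod_def using y
    by (auto simp: power2_eq_square lessThan_atLeast0 intro!: sum.cong)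
  finally show ?thesis unfolding y_def .
qed

lemma second_eigenvalue_le_Rayleigh_coords:
  assumes x: "x \<in> carrier_vec n" and x0: "(transpose_mat U *\<^sub>v x) $ 0 = 0" and n: "1 < n"
  shows "es ! 1 * (x \<bullet> x) \<le> x \<bullet> (M *\<^sub>v x)"
proof -
  let ?c = "\<lambda>i. (transpose_mat U *\<^sub>v x) $ i"
  have "es ! 1 * (x \<bullet> x) = (\<Sum>i<n. es ! 1 * (?c i)\<^sup>2)"
    unfolding sprod_self_coords[OF x] by (simp add: sum_distrib_left)
  also have "\<dots> \<le> (\<Sum>i<n. es ! i * (?c i)\<^sup>2)"
  proof (rule sum_mono)
    fix i assume "i \<in> {..<n}"
    thus "es ! 1 * (?c i)\<^sup>2 \<le> es ! i * (?c i)\<^sup>2"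
      using x0 sorted_nth_mono[OF sorted, of 1 i] length
      by (cases "i = 0") (auto intro: mult_right_mono)
  qed
  also have "\<dots> = x \<bullet> (M *\<^sub>v x)" by (rule quadratic_form_coords[OF x, symmetric])
  finally show ?thesis .
qed

lemma Rayleigh_coords_le_second_eigenvalue:
  assumes y: "y \<in> carrier_vec n" and y_vanish: "\<And>i. 2 \<le> i \<Longrightarrow> i < n \<Longrightarrow> y $ i = 0"
    and n: "1 < n"
  shows "(U *\<^sub>v y) \<bullet> (M *\<^sub>v (U *\<^sub>v y)) \<le> es ! 1 * ((U *\<^sub>v y) \<bullet> (U *\<^sub>v y))"
proof -
  have x: "U *\<^sub>v y \<in> carrier_vec n" using U y by simp
  have "(U *\<^sub>v y) \<bullet> (M *\<^sub>v (U *\<^sub>v y)) = (\<Sum>i<n. es ! i * (y $ i)\<^sup>2)"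
    unfolding quadratic_form_coords[OF x] coords_inverse[OF y] ..
  also have "\<dots> \<le> (\<Sum>i<n. es ! 1 * (y $ i)\<^sup>2)"
  proof (rule sum_mono)
    fix i assume "i \<in> {..<n}"
    thus "es ! i * (y $ i)\<^sup>2 \<le> es ! 1 * (y $ i)\<^sup>2"
      using y_vanish[of i] sorted_nth_mono[OF sorted, of i 1] length n
      by (cases "i \<le> 1") (auto intro: mult_right_mono)
  qed
  also have "\<dots> = es ! 1 * ((U *\<^sub>v y) \<bullet> (U *\<^sub>v y))"
    unfolding sprod_self_coords[OF x] coords_inverse[OF y] by (simp add: sum_distrib_left)
  finally show ?thesis .
qed

end

lemma psd_second_eigenvalue_nonneg:
  fixes M :: "real mat"
  assumes M: "M \<in> carrier_mat n n" and sym: "transpose_mat M = M" and n: "2 \<le> n"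
    and psd: "\<And>x. x \<in> carrier_vec n \<Longrightarrow> 0 \<le> x \<bullet> (M *\<^sub>v x)"
  shows "0 \<le> sorted_eigenvalues M ! 1"
proof -
  obtain U where "sorted_spectral_decomposition M U (sorted_eigenvalues M) n"
    using sorted_eigenvalues_spectral_decomposition[OF M sym] .
  then interpret sorted_spectral_decomposition M U "sorted_eigenvalues M" n .
  define y :: "real vec" where "y = unit_vec n 1"
  have y: "y \<in> carrier_vec n" unfolding y_def by simp
  have "(U *\<^sub>v y) \<bullet> (M *\<^sub>v (U *\<^sub>v y)) = (\<Sum>i<n. if i = 1 then sorted_eigenvalues M ! 1 else 0)"
    unfolding quadratic_form_coords[OF mult_mat_vec_carrier[OF U y]] coords_inverse[OF y]
    by (intro sum.cong) (auto simp: y_def unit_vec_def)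
  thus ?thesis using psd[OF mult_mat_vec_carrier[OF U y]] n by simp
qed

lemma second_eigenvalue_test_vector:
  fixes M :: "real mat"
  assumes M: "M \<in> carrier_mat n n" and sym: "transpose_mat M = M" and n: "2 \<le> n"
    and u: "u \<in> carrier_vec n"
  obtains f where "f \<in> carrier_vec n" "f \<noteq> 0\<^sub>v n" "f \<bullet> u = 0"
    "f \<bullet> (M *\<^sub>v f) \<le> sorted_eigenvalues M ! 1 * (f \<bullet> f)"
proof -
  obtain U where "sorted_spectral_decomposition M U (sorted_eigenvalues M) n"
    using sorted_eigenvalues_spectral_decomposition[OF M sym] .
  then interpret sorted_spectral_decomposition M U "sorted_eigenvalues M" n .
  define a where "a = transpose_mat U *\<^sub>v u"
  have a: "a \<in> carrier_vec n" unfolding a_def using coords_carrier[OF u] .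
  \<comment> \<open>in eigen-coordinates, a nonzero combination of the two lowest eigenvectors orthogonal to \<open>u\<close>\<close>
  define y where "y = (if a $ 0 = 0 then unit_vec n 0
    else a $ 1 \<cdot>\<^sub>v unit_vec n 0 - a $ 0 \<cdot>\<^sub>v unit_vec n 1)"
  have y: "y \<in> carrier_vec n" unfolding y_def by auto
  have y_vanish: "y $ i = 0" if "2 \<le> i" "i < n" for i using that unfolding y_def by auto
  have "y \<noteq> 0\<^sub>v n"
  proof
    assume "y = 0\<^sub>v n"
    hence "y $ 0 = 0" "y $ 1 = 0" using n by auto
    thus False unfolding y_def using n by (auto split: if_splits)
  qed
  have ya: "y \<bullet> a = 0"
    unfolding y_def using a n by (simp add: minus_scalar_prod_distrib[of _ n])
  show thesis
  proof
    show f: "U *\<^sub>v y \<in> carrier_vec n" using U y by simp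
    have "(U *\<^sub>v y) \<bullet> (U *\<^sub>v y) = y \<bullet> y"
      using coords_sprod[OF f f] unfolding coords_inverse[OF y] ..
    thus "U *\<^sub>v y \<noteq> 0\<^sub>v n"
      using \<open>y \<noteq> 0\<^sub>v n\<close> real_sprod_self_pos_iff[OF y] real_sprod_self_pos_iff[OF f] by auto
    show "(U *\<^sub>v y) \<bullet> u = 0"
      using coords_sprod[OF f u] ya unfolding coords_inverse[OF y] a_def by simp
    show "(U *\<^sub>v y) \<bullet> (M *\<^sub>v (U *\<^sub>v y)) \<le> sorted_eigenvalues M ! 1 * ((U *\<^sub>v y) \<bullet> (U *\<^sub>v y))"
      using Rayleigh_coords_le_second_eigenvalue[OF y y_vanish] n by simp
  qed
qed

lemma combination_with_null_vector:
  fixes M :: "real mat"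
  assumes M: "M \<in> carrier_mat n n" and sym: "transpose_mat M = M"
    and u: "u \<in> carrier_vec n" and Mu: "M *\<^sub>v u = 0\<^sub>v n"
    and F: "F \<in> carrier_vec n" and Fu: "F \<bullet> u = 0"
  shows "(b \<cdot>\<^sub>v u - a \<cdot>\<^sub>v F) \<bullet> (M *\<^sub>v (b \<cdot>\<^sub>v u - a \<cdot>\<^sub>v F)) = a\<^sup>2 * (F \<bullet> (M *\<^sub>v F))"
    and "(b \<cdot>\<^sub>v u - a \<cdot>\<^sub>v F) \<bullet> (b \<cdot>\<^sub>v u - a \<cdot>\<^sub>v F) = b\<^sup>2 * (u \<bullet> u) + a\<^sup>2 * (F \<bullet> F)"
proof -
  have MF: "M *\<^sub>v F \<in> carrier_vec n" using M F by simp
  have uMF: "u \<bullet> (M *\<^sub>v F) = 0"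
    using transpose_vec_mult_scalar[OF M F u] F unfolding sym Mu by simp
  have "M *\<^sub>v (b \<cdot>\<^sub>v u - a \<cdot>\<^sub>v F) = - a \<cdot>\<^sub>v (M *\<^sub>v F)"
    using M u F Mu
    by (auto simp: mult_minus_distrib_mat_vec[of _ n n] mult_mat_vec[of _ n n] intro!: eq_vecI)
  thus "(b \<cdot>\<^sub>v u - a \<cdot>\<^sub>v F) \<bullet> (M *\<^sub>v (b \<cdot>\<^sub>v u - a \<cdot>\<^sub>v F)) = a\<^sup>2 * (F \<bullet> (M *\<^sub>v F))"
    using u F MF uMF by (simp add: minus_scalar_prod_distrib[of _ n] power2_eq_square)
  show "(b \<cdot>\<^sub>v u - a \<cdot>\<^sub>v F) \<bullet> (b \<cdot>\<^sub>v u - a \<cdot>\<^sub>v F) = b\<^sup>2 * (u \<bullet> u) + a\<^sup>2 * (F \<bullet> F)"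
    using u F Fu comm_scalar_prod[OF F u]
    by (simp add: minus_scalar_prod_distrib[of _ n] scalar_prod_minus_distrib[of _ n] power2_eq_square)
qed

lemma second_eigenvalue_le_Rayleigh:
  fixes M :: "real mat"
  assumes M: "M \<in> carrier_mat n n" and sym: "transpose_mat M = M" and n: "2 \<le> n"
    and psd: "\<And>x. x \<in> carrier_vec n \<Longrightarrow> 0 \<le> x \<bullet> (M *\<^sub>v x)"
    and u: "u \<in> carrier_vec n" "u \<noteq> 0\<^sub>v n" and Mu: "M *\<^sub>v u = 0\<^sub>v n"
    and F: "F \<in> carrier_vec n" "F \<noteq> 0\<^sub>v n" "F \<bullet> u = 0"
  shows "sorted_eigenvalues M ! 1 * (F \<bullet> F) \<le> F \<bullet> (M *\<^sub>v F)"
proof -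
  obtain U where "sorted_spectral_decomposition M U (sorted_eigenvalues M) n"
    using sorted_eigenvalues_spectral_decomposition[OF M sym] .
  then interpret sorted_spectral_decomposition M U "sorted_eigenvalues M" n .
  define g where "g = sorted_eigenvalues M ! 1"
  define a where "a = (transpose_mat U *\<^sub>v u) $ 0"
  define b where "b = (transpose_mat U *\<^sub>v F) $ 0"
  show ?thesis
  proof (cases "b = 0")
    case True
    thus ?thesis using second_eigenvalue_le_Rayleigh_coords[OF F(1)] n unfolding b_def by simp
  next
    case False
    \<comment> \<open>this combination has vanishing first eigen-coordinate\<close>
    have "transpose_mat U *\<^sub>v (b \<cdot>\<^sub>v u - a \<cdot>\<^sub>v F)
        = b \<cdot>\<^sub>v (transpose_mat U *\<^sub>v u) - a \<cdot>\<^sub>v (transpose_mat U *\<^sub>v F)"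
      using U u F by (simp add: mult_minus_distrib_mat_vec[of _ n n] mult_mat_vec[of _ n n])
    hence "(transpose_mat U *\<^sub>v (b \<cdot>\<^sub>v u - a \<cdot>\<^sub>v F)) $ 0 = 0"
      using U u F n unfolding a_def b_def by simp
    hence key: "g * (b\<^sup>2 * (u \<bullet> u) + a\<^sup>2 * (F \<bullet> F)) \<le> a\<^sup>2 * (F \<bullet> (M *\<^sub>v F))"
      using second_eigenvalue_le_Rayleigh_coords[of "b \<cdot>\<^sub>v u - a \<cdot>\<^sub>v F"] u F n
      unfolding combination_with_null_vector[OF M sym u(1) Mu F(1,3)] g_def by simp
    show ?thesis
    proof (cases "g \<le> 0")
      case True
      thus ?thesis using psd[OF F(1)] real_sprod_self_nonneg[of F] unfolding g_def
        by (smt (verit) mult_nonpos_nonneg)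
    next
      case False
      have "0 < g * (b\<^sup>2 * (u \<bullet> u))"
        using \<open>b \<noteq> 0\<close> False real_sprod_self_pos_iff[OF u(1)] u(2) by simp
      hence "a\<^sup>2 * (g * (F \<bullet> F)) \<le> a\<^sup>2 * (F \<bullet> (M *\<^sub>v F))" and "a \<noteq> 0"
        using key by (auto simp: algebra_simps)
      thus ?thesis unfolding g_def by simp
    qed
  qed
qed

section \<open>Kernels on finite sets as matrices\<close>

definition kernel_mat :: "'a list \<Rightarrow> ('a \<Rightarrow> 'a \<Rightarrow> real) \<Rightarrow> real mat" where
  "kernel_mat xs g = mat (length xs) (length xs) (\<lambda>(i, j). g (xs ! i) (xs ! j))"

definition vec_of_fun :: "'a list \<Rightarrow> ('a \<Rightarrow> real) \<Rightarrow> real vec" where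
  "vec_of_fun xs h = vec (length xs) (\<lambda>i. h (xs ! i))"

definition quadratic_form :: "'a set \<Rightarrow> ('a \<Rightarrow> 'a \<Rightarrow> real) \<Rightarrow> ('a \<Rightarrow> real) \<Rightarrow> real" where
  "quadratic_form S g h = (\<Sum>\<sigma>\<in>S. \<Sum>\<eta>\<in>S. h \<sigma> * g \<sigma> \<eta> * h \<eta>)"

lemma kernel_mat_carrier [simp]: "kernel_mat xs g \<in> carrier_mat (length xs) (length xs)"
  unfolding kernel_mat_def by simp

lemma vec_of_fun_carrier [simp]: "vec_of_fun xs h \<in> carrier_vec (length xs)"
  unfolding vec_of_fun_def by simp

lemma kernel_mat_symmetric:
  "(\<And>\<sigma> \<eta>. g \<sigma> \<eta> = g \<eta> \<sigma>) \<Longrightarrow> transpose_mat (kernel_mat xs g) = kernel_mat xs g"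
  unfolding kernel_mat_def by (intro eq_matI) auto

context
  fixes xs :: "'a list"
  assumes distinct: "distinct xs"
begin

lemma sum_nth_eq_sum_set: "(\<Sum>i<length xs. f (xs ! i)) = (\<Sum>\<sigma>\<in>set xs. f \<sigma>)"
  using sum.reindex_bij_betw[OF bij_betw_nth[OF distinct refl refl], of f] by simp

lemma vec_of_fun_sprod: "vec_of_fun xs h \<bullet> vec_of_fun xs h' = (\<Sum>\<sigma>\<in>set xs. h \<sigma> * h' \<sigma>)"
  unfolding vec_of_fun_def scalar_prod_def using sum_nth_eq_sum_set[of "\<lambda>\<sigma>. h \<sigma> * h' \<sigma>"]
  by (simp add: lessThan_atLeast0)

lemma kernel_mat_mult_vec_of_fun:
  "kernel_mat xs g *\<^sub>v vec_of_fun xs h = vec_of_fun xs (\<lambda>\<sigma>. \<Sum>\<eta>\<in>set xs. g \<sigma> \<eta> * h \<eta>)"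
proof (rule eq_vecI)
  fix i assume "i < dim_vec (vec_of_fun xs (\<lambda>\<sigma>. \<Sum>\<eta>\<in>set xs. g \<sigma> \<eta> * h \<eta>))"
  hence i: "i < length xs" by (simp add: vec_of_fun_def)
  have "(kernel_mat xs g *\<^sub>v vec_of_fun xs h) $ i = (\<Sum>j<length xs. g (xs ! i) (xs ! j) * h (xs ! j))"
    using i unfolding kernel_mat_def vec_of_fun_def by (simp add: lessThan_atLeast0 row_def scalar_prod_def)
  thus "(kernel_mat xs g *\<^sub>v vec_of_fun xs h) $ i = vec_of_fun xs (\<lambda>\<sigma>. \<Sum>\<eta>\<in>set xs. g \<sigma> \<eta> * h \<eta>) $ i"
    using i sum_nth_eq_sum_set[of "\<lambda>\<eta>. g (xs ! i) \<eta> * h \<eta>"] by (simp add: vec_of_fun_def)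
qed (simp add: kernel_mat_def vec_of_fun_def)

lemma quadratic_form_vec_of_fun:
  "vec_of_fun xs h \<bullet> (kernel_mat xs g *\<^sub>v vec_of_fun xs h) = quadratic_form (set xs) g h"
  unfolding kernel_mat_mult_vec_of_fun vec_of_fun_sprod quadratic_form_def
  by (simp add: sum_distrib_left mult.assoc)

lemma vec_of_fun_eq_zero_iff: "vec_of_fun xs h = 0\<^sub>v (length xs) \<longleftrightarrow> (\<forall>\<sigma>\<in>set xs. h \<sigma> = 0)"
  by (fastforce simp: vec_of_fun_def vec_eq_iff in_set_conv_nth)

lemma ex_vec_of_fun: "x \<in> carrier_vec (length xs) \<Longrightarrow> \<exists>h. x = vec_of_fun xs h"
proof
  assume x: "x \<in> carrier_vec (length xs)"
  have "inv_into {..<length xs} ((!) xs) (xs ! i) = i" if "i < length xs" for i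
    using that bij_betw_nth[OF distinct refl refl] by (simp add: bij_betw_def inv_into_f_f)
  thus "x = vec_of_fun xs (\<lambda>\<sigma>. x $ inv_into {..<length xs} ((!) xs) \<sigma>)"
    using x by (intro eq_vecI) (auto simp: vec_of_fun_def)
qed

lemma kernel_mat_psd:
  "(\<And>h. 0 \<le> quadratic_form (set xs) g h) \<Longrightarrow> x \<in> carrier_vec (length xs) \<Longrightarrow>
     0 \<le> x \<bullet> (kernel_mat xs g *\<^sub>v x)"
  using ex_vec_of_fun quadratic_form_vec_of_fun by metis

end

lemma kernel_second_eigenvalue_nonneg:
  assumes distinct: "distinct xs" and len: "2 \<le> length xs"
    and sym: "\<And>\<sigma> \<eta>. g \<sigma> \<eta> = g \<eta> \<sigma>" and psd: "\<And>h. 0 \<le> quadratic_form (set xs) g h"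
  shows "0 \<le> sorted_eigenvalues (kernel_mat xs g) ! 1"
  using psd_second_eigenvalue_nonneg[OF kernel_mat_carrier kernel_mat_symmetric[OF sym] len
      kernel_mat_psd[OF distinct psd]] .

lemma kernel_second_eigenvalue_test_function:
  assumes distinct: "distinct xs" and len: "2 \<le> length xs"
    and sym: "\<And>\<sigma> \<eta>. g \<sigma> \<eta> = g \<eta> \<sigma>"
  obtains h where "(\<Sum>\<sigma>\<in>set xs. h \<sigma>) = 0" "\<exists>\<sigma>\<in>set xs. h \<sigma> \<noteq> 0"
    "quadratic_form (set xs) g h \<le> sorted_eigenvalues (kernel_mat xs g) ! 1 * (\<Sum>\<sigma>\<in>set xs. (h \<sigma>)\<^sup>2)"
proof -
  obtain f where f: "f \<in> carrier_vec (length xs)" "f \<noteq> 0\<^sub>v (length xs)"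
    "f \<bullet> vec_of_fun xs (\<lambda>_. 1) = 0"
    "f \<bullet> (kernel_mat xs g *\<^sub>v f) \<le> sorted_eigenvalues (kernel_mat xs g) ! 1 * (f \<bullet> f)"
    using second_eigenvalue_test_vector[OF kernel_mat_carrier kernel_mat_symmetric[OF sym] len
        vec_of_fun_carrier] .
  then obtain h where "f = vec_of_fun xs h" using ex_vec_of_fun[OF distinct] by blast
  with f show thesis
    by (intro that) (simp_all add: vec_of_fun_sprod[OF distinct] vec_of_fun_eq_zero_iff[OF distinct]
        quadratic_form_vec_of_fun[OF distinct] power2_eq_square)
qed

lemma kernel_second_eigenvalue_le_Rayleigh:
  assumes distinct: "distinct xs" and len: "2 \<le> length xs"
    and sym: "\<And>\<sigma> \<eta>. g \<sigma> \<eta> = g \<eta> \<sigma>" and psd: "\<And>h. 0 \<le> quadratic_form (set xs) g h"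
    and rows: "\<And>\<sigma>. \<sigma> \<in> set xs \<Longrightarrow> (\<Sum>\<eta>\<in>set xs. g \<sigma> \<eta>) = 0"
    and F_sum: "(\<Sum>\<sigma>\<in>set xs. F \<sigma>) = 0" and F_nonzero: "\<exists>\<sigma>\<in>set xs. F \<sigma> \<noteq> 0"
  shows "sorted_eigenvalues (kernel_mat xs g) ! 1 * (\<Sum>\<sigma>\<in>set xs. (F \<sigma>)\<^sup>2) \<le> quadratic_form (set xs) g F"
proof -
  let ?one = "vec_of_fun xs (\<lambda>_. 1)"
  have "?one \<noteq> 0\<^sub>v (length xs)" using len vec_of_fun_eq_zero_iff[OF distinct] by fastforce
  moreover have "kernel_mat xs g *\<^sub>v ?one = 0\<^sub>v (length xs)"
    unfolding kernel_mat_mult_vec_of_fun[OF distinct] vec_of_fun_eq_zero_iff[OF distinct] using rows by simp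
  ultimately have "sorted_eigenvalues (kernel_mat xs g) ! 1 * (vec_of_fun xs F \<bullet> vec_of_fun xs F)
      \<le> vec_of_fun xs F \<bullet> (kernel_mat xs g *\<^sub>v vec_of_fun xs F)"
    using F_sum F_nonzero
    by (intro second_eigenvalue_le_Rayleigh[OF kernel_mat_carrier kernel_mat_symmetric[OF sym] len
        kernel_mat_psd[OF distinct psd]])
      (auto simp: vec_of_fun_sprod[OF distinct] vec_of_fun_eq_zero_iff[OF distinct])
  thus ?thesis
    by (simp add: vec_of_fun_sprod[OF distinct] quadratic_form_vec_of_fun[OF distinct] power2_eq_square)
qed

section \<open>Glauber dynamics\<close>

lemma finite_proper_colourings: "finite W \<Longrightarrow> finite (proper_colourings E W k)"
proof -
  assume W: "finite W"
  have "proper_colourings E W k \<subseteq> {f. \<forall>x. (x \<in> W \<longrightarrow> f x \<in> {..<k}) \<and> (x \<notin> W \<longrightarrow> f x = 0)}"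
    unfolding proper_colourings_def by auto
  moreover have "finite {f. \<forall>x. (x \<in> W \<longrightarrow> f x \<in> {..<k}) \<and> (x \<notin> W \<longrightarrow> f x = (0::nat))}"
    by (rule finite_set_of_finite_funs) (use W in auto)
  ultimately show ?thesis by (rule finite_subset)
qed

lemma
  assumes "finite W"
  shows distinct_state_list: "distinct (state_list E W k)"
    and set_state_list: "set (state_list E W k) = proper_colourings E W k"
proof -
  have "\<exists>xs. distinct xs \<and> set xs = proper_colourings E W k"
    using finite_distinct_list[OF finite_proper_colourings[OF assms]] by metis
  hence "distinct (state_list E W k) \<and> set (state_list E W k) = proper_colourings E W k"
    unfolding state_list_def by (rule someI_ex)
  thus "distinct (state_list E W k)" "set (state_list E W k) = proper_colourings E W k" by auto
qed

lemma length_state_list: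
  "finite W \<Longrightarrow> length (state_list E W k) = card (proper_colourings E W k)"
  using distinct_state_list set_state_list distinct_card by metis

lemma glauber_gap_kernel_mat:
  "glauber_gap E W k p =
     sorted_eigenvalues (kernel_mat (state_list E W k) (\<lambda>\<sigma> \<eta>. - glauber_generator E W k p \<sigma> \<eta>)) ! 1"
  unfolding glauber_gap_def minus_generator_mat_def kernel_mat_def Let_def by simp

lemma glauber_rate_commute: "glauber_rate p W \<sigma> \<eta> = glauber_rate p W \<eta> \<sigma>"
proof -
  have "{y. \<sigma> y \<noteq> \<eta> y} = {y. \<eta> y \<noteq> \<sigma> y}" by auto
  thus ?thesis unfolding glauber_rate_def by simp
qed

lemma glauber_rate_self [simp]: "glauber_rate p W \<sigma> \<sigma> = 0"
  unfolding glauber_rate_def by auto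

lemma glauber_rate_nonneg:
  assumes "\<And>x. x \<in> W \<Longrightarrow> 0 \<le> p x"
  shows "0 \<le> glauber_rate p W \<sigma> \<eta>"
proof (cases "\<exists>x\<in>W. {y. \<sigma> y \<noteq> \<eta> y} = {x}")
  case True
  then obtain x where x: "x \<in> W" "{y. \<sigma> y \<noteq> \<eta> y} = {x}" by blast
  hence "(THE x. {y. \<sigma> y \<noteq> \<eta> y} = {x}) = x" by auto
  thus ?thesis unfolding glauber_rate_def using x assms by auto
qed (simp add: glauber_rate_def)

lemma glauber_generator_commute: "glauber_generator E W k p \<sigma> \<eta> = glauber_generator E W k p \<eta> \<sigma>"
  unfolding glauber_generator_def using glauber_rate_commute by auto

definition glauber_dirichlet_form ::
    "(nat \<Rightarrow> real) \<Rightarrow> nat set \<Rightarrow> (nat \<Rightarrow> nat) set \<Rightarrow> ((nat \<Rightarrow> nat) \<Rightarrow> real) \<Rightarrow> real" where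
  "glauber_dirichlet_form p W S h = (\<Sum>\<sigma>\<in>S. \<Sum>\<eta>\<in>S. glauber_rate p W \<sigma> \<eta> * (h \<sigma> - h \<eta>)\<^sup>2) / 2"

lemma glauber_dirichlet_form_nonneg:
  "(\<And>x. x \<in> W \<Longrightarrow> 0 \<le> p x) \<Longrightarrow> 0 \<le> glauber_dirichlet_form p W S h"
  unfolding glauber_dirichlet_form_def by (intro divide_nonneg_nonneg sum_nonneg mult_nonneg_nonneg glauber_rate_nonneg) auto

context
  fixes E :: "nat \<Rightarrow> nat \<Rightarrow> bool" and W :: "nat set" and k :: nat and p :: "nat \<Rightarrow> real"
  assumes W: "finite W"
begin

private abbreviation (input) "\<Omega> \<equiv> proper_colourings E W k"

lemma minus_glauber_generator_eq:
  "- glauber_generator E W k p \<sigma> \<eta> =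
     (if \<sigma> = \<eta> then (\<Sum>\<zeta>\<in>\<Omega>. glauber_rate p W \<sigma> \<zeta>) else 0) - glauber_rate p W \<sigma> \<eta>"
proof -
  have "(\<Sum>\<zeta>\<in>\<Omega> - {\<sigma>}. glauber_rate p W \<sigma> \<zeta>) = (\<Sum>\<zeta>\<in>\<Omega>. glauber_rate p W \<sigma> \<zeta>)"
    using finite_proper_colourings[OF W] by (simp add: sum_diff1)
  thus ?thesis unfolding glauber_generator_def by auto
qed

lemma glauber_generator_row_sum:
  "\<sigma> \<in> \<Omega> \<Longrightarrow> (\<Sum>\<eta>\<in>\<Omega>. - glauber_generator E W k p \<sigma> \<eta>) = 0"
  unfolding minus_glauber_generator_eq using finite_proper_colourings[OF W] by (simp add: sum_subtractf)

lemma quadratic_form_minus_glauber_generator: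
  "quadratic_form \<Omega> (\<lambda>\<sigma> \<eta>. - glauber_generator E W k p \<sigma> \<eta>) h = glauber_dirichlet_form p W \<Omega> h"
proof -
  let ?r = "glauber_rate p W"
  define diag where "diag = (\<Sum>\<sigma>\<in>\<Omega>. (h \<sigma>)\<^sup>2 * (\<Sum>\<zeta>\<in>\<Omega>. ?r \<sigma> \<zeta>))"
  define cross where "cross = (\<Sum>\<sigma>\<in>\<Omega>. \<Sum>\<eta>\<in>\<Omega>. h \<sigma> * ?r \<sigma> \<eta> * h \<eta>)"
  have fin: "finite \<Omega>" by (rule finite_proper_colourings[OF W])
  have "quadratic_form \<Omega> (\<lambda>\<sigma> \<eta>. - glauber_generator E W k p \<sigma> \<eta>) h
      = (\<Sum>\<sigma>\<in>\<Omega>. (\<Sum>\<eta>\<in>\<Omega>. if \<sigma> = \<eta> then (h \<sigma>)\<^sup>2 * (\<Sum>\<zeta>\<in>\<Omega>. ?r \<sigma> \<zeta>) else 0)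
          - (\<Sum>\<eta>\<in>\<Omega>. h \<sigma> * ?r \<sigma> \<eta> * h \<eta>))"
    unfolding quadratic_form_def minus_glauber_generator_eq
    by (intro sum.cong refl, subst sum_subtractf[symmetric], intro sum.cong refl)
      (auto simp: algebra_simps power2_eq_square)
  also have "\<dots> = diag - cross"
    unfolding diag_def cross_def using fin by (simp add: sum_subtractf)
  finally have "quadratic_form \<Omega> (\<lambda>\<sigma> \<eta>. - glauber_generator E W k p \<sigma> \<eta>) h = diag - cross" .
  moreover have "(\<Sum>\<sigma>\<in>\<Omega>. \<Sum>\<eta>\<in>\<Omega>. ?r \<sigma> \<eta> * (h \<sigma>)\<^sup>2) = diag"
    unfolding diag_def by (simp add: sum_distrib_left sum_distrib_right mult.commute)
  moreover have "(\<Sum>\<sigma>\<in>\<Omega>. \<Sum>\<eta>\<in>\<Omega>. ?r \<sigma> \<eta> * (h \<eta>)\<^sup>2) = diag"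
    unfolding diag_def
    by (subst sum.swap) (simp add: sum_distrib_left sum_distrib_right glauber_rate_commute[of p W _] mult.commute)
  moreover have "(\<Sum>\<sigma>\<in>\<Omega>. \<Sum>\<eta>\<in>\<Omega>. ?r \<sigma> \<eta> * (h \<sigma> - h \<eta>)\<^sup>2)
      = (\<Sum>\<sigma>\<in>\<Omega>. \<Sum>\<eta>\<in>\<Omega>. ?r \<sigma> \<eta> * (h \<sigma>)\<^sup>2) + (\<Sum>\<sigma>\<in>\<Omega>. \<Sum>\<eta>\<in>\<Omega>. ?r \<sigma> \<eta> * (h \<eta>)\<^sup>2)
        - 2 * cross"
    unfolding cross_def
    by (simp add: power2_diff algebra_simps sum.distrib sum_subtractf sum_distrib_left)
  ultimately show ?thesis unfolding glauber_dirichlet_form_def by simp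
qed

end

lemma glauber_gap_nonneg:
  assumes W: "finite W" and p: "\<And>x. x \<in> W \<Longrightarrow> 0 \<le> p x"
    and card: "2 \<le> card (proper_colourings E W k)"
  shows "0 \<le> glauber_gap E W k p"
  unfolding glauber_gap_kernel_mat
proof (rule kernel_second_eigenvalue_nonneg)
  show "distinct (state_list E W k)" by (rule distinct_state_list[OF W])
  show "2 \<le> length (state_list E W k)" using card by (simp add: length_state_list[OF W])
  show "0 \<le> quadratic_form (set (state_list E W k)) (\<lambda>\<sigma> \<eta>. - glauber_generator E W k p \<sigma> \<eta>) h" for h
    unfolding set_state_list[OF W] quadratic_form_minus_glauber_generator[OF W]
    by (rule glauber_dirichlet_form_nonneg[OF p])
qed (simp add: glauber_generator_commute)

lemma glauber_gap_le_Dirichlet_form: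
  assumes W: "finite W" and p: "\<And>x. x \<in> W \<Longrightarrow> 0 \<le> p x"
    and card: "2 \<le> card (proper_colourings E W k)"
    and F_sum: "(\<Sum>\<sigma>\<in>proper_colourings E W k. F \<sigma>) = 0"
    and F_nonzero: "\<exists>\<sigma>\<in>proper_colourings E W k. F \<sigma> \<noteq> 0"
  shows "glauber_gap E W k p * (\<Sum>\<sigma>\<in>proper_colourings E W k. (F \<sigma>)\<^sup>2)
           \<le> glauber_dirichlet_form p W (proper_colourings E W k) F"
  using kernel_second_eigenvalue_le_Rayleigh[of "state_list E W k" "\<lambda>\<sigma> \<eta>. - glauber_generator E W k p \<sigma> \<eta>" F]
  unfolding glauber_gap_kernel_mat set_state_list[OF W] quadratic_form_minus_glauber_generator[OF W]
  using distinct_state_list[OF W] card F_sum F_nonzero glauber_dirichlet_form_nonneg[OF p]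
    glauber_generator_row_sum[OF W]
  by (simp add: length_state_list[OF W] glauber_generator_commute[of E W k p])

lemma glauber_gap_test_function:
  assumes W: "finite W" and card: "2 \<le> card (proper_colourings E W k)"
  obtains h where "(\<Sum>\<sigma>\<in>proper_colourings E W k. h \<sigma>) = 0" "\<exists>\<sigma>\<in>proper_colourings E W k. h \<sigma> \<noteq> 0"
    "glauber_dirichlet_form p W (proper_colourings E W k) h
       \<le> glauber_gap E W k p * (\<Sum>\<sigma>\<in>proper_colourings E W k. (h \<sigma>)\<^sup>2)"
proof -
  have len: "2 \<le> length (state_list E W k)" using card by (simp add: length_state_list[OF W])
  have sym: "- glauber_generator E W k p \<sigma> \<eta> = - glauber_generator E W k p \<eta> \<sigma>" for \<sigma> \<eta>
    using glauber_generator_commute by metis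
  obtain h where "(\<Sum>\<sigma>\<in>set (state_list E W k). h \<sigma>) = 0" "\<exists>\<sigma>\<in>set (state_list E W k). h \<sigma> \<noteq> 0"
    "quadratic_form (set (state_list E W k)) (\<lambda>\<sigma> \<eta>. - glauber_generator E W k p \<sigma> \<eta>) h
       \<le> sorted_eigenvalues (kernel_mat (state_list E W k) (\<lambda>\<sigma> \<eta>. - glauber_generator E W k p \<sigma> \<eta>)) ! 1
          * (\<Sum>\<sigma>\<in>set (state_list E W k). (h \<sigma>)\<^sup>2)"
    using kernel_second_eigenvalue_test_function[OF distinct_state_list[OF W] len sym] .
  thus thesis
    using that unfolding glauber_gap_kernel_mat set_state_list[OF W] quadratic_form_minus_glauber_generator[OF W]
    by blast
qed

lemma relaxation_time_le_of_gap_le: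
  assumes W: "finite W" and p: "\<And>x. x \<in> W \<Longrightarrow> 0 \<le> p x"
    and gap_le: "2 \<le> card (proper_colourings E' W' k) \<Longrightarrow>
      2 \<le> card (proper_colourings E W k) \<and> glauber_gap E W k p \<le> glauber_gap E' W' k p"
  shows "relaxation_time E' W' k p \<le> relaxation_time E W k p"
proof (cases "card (proper_colourings E' W' k) < 2")
  case True
  thus ?thesis using glauber_gap_nonneg[OF W p] by (auto simp: relaxation_time_def)
next
  case False
  hence "2 \<le> card (proper_colourings E W k)" and le: "glauber_gap E W k p \<le> glauber_gap E' W' k p"
    using gap_le by auto
  moreover from this have "0 \<le> glauber_gap E W k p" by (intro glauber_gap_nonneg[OF W p])
  ultimately show ?thesis using False
    by (auto simp: relaxation_time_def frac_le)
qed

section \<open>Deleting a simplicial vertex\<close>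

lemma glauber_rate_eq_0_if_two_changes:
  assumes "\<sigma> x \<noteq> \<eta> x" and "\<sigma> y \<noteq> \<eta> y" and "x \<noteq> y"
  shows "glauber_rate p W \<sigma> \<eta> = 0"
proof -
  have "{z. \<sigma> z \<noteq> \<eta> z} \<noteq> {u}" for u
    using assms by (auto simp: set_eq_iff)
  thus ?thesis unfolding glauber_rate_def by auto
qed

lemma glauber_rate_update:
  assumes "\<tau> v = 0"
  shows "glauber_rate p W \<sigma> (\<tau>(v := \<sigma> v)) = glauber_rate p (W - {v}) (\<sigma>(v := 0)) \<tau>"
proof -
  have diff: "{z. \<sigma> z \<noteq> (\<tau>(v := \<sigma> v)) z} = {z. (\<sigma>(v := 0)) z \<noteq> \<tau> z}"
    using assms by auto
  have "v \<notin> {z. (\<sigma>(v := 0)) z \<noteq> \<tau> z}" using assms by simp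
  hence ex: "(\<exists>x\<in>W. {z. (\<sigma>(v := 0)) z \<noteq> \<tau> z} = {x})
      \<longleftrightarrow> (\<exists>x\<in>W - {v}. {z. (\<sigma>(v := 0)) z \<noteq> \<tau> z} = {x})"
    by blast
  show ?thesis unfolding glauber_rate_def diff ex ..
qed

locale simplicial_vertex =
  fixes E :: "nat \<Rightarrow> nat \<Rightarrow> bool" and W :: "nat set" and k v :: nat
  assumes finite: "finite W" and v: "v \<in> W"
    and sym: "\<And>x y. E x y \<Longrightarrow> E y x" and irrefl: "\<And>x. \<not> E x x"
    and clique: "is_clique E (neighbourhood E W v)"
    and free_colour: "card (neighbourhood E W v) < k"
begin

abbreviation "N \<equiv> neighbourhood E W v"
abbreviation "\<Omega> \<equiv> proper_colourings E W k"
abbreviation "\<Omega>' \<equiv> proper_colourings (\<lambda>x y. E x y \<and> x \<noteq> v \<and> y \<noteq> v) (W - {v}) k"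

\<comment> \<open>colourings of \<open>G - v\<close> are \<open>0\<close> at \<open>v\<close>, so forgetting the colour of \<open>v\<close> means resetting it to \<open>0\<close>\<close>
definition uncolour :: "(nat \<Rightarrow> nat) \<Rightarrow> nat \<Rightarrow> nat" where
  "uncolour \<sigma> = \<sigma>(v := 0)"

definition extensions :: "(nat \<Rightarrow> nat) \<Rightarrow> (nat \<Rightarrow> nat) set" where
  "extensions \<tau> = {\<sigma> \<in> \<Omega>. uncolour \<sigma> = \<tau>}"

lemma neighbourhood_subset: "N \<subseteq> W - {v}"
  unfolding neighbourhood_def using irrefl by auto

lemma uncolour_mem: "\<sigma> \<in> \<Omega> \<Longrightarrow> uncolour \<sigma> \<in> \<Omega>'"
  unfolding proper_colourings_def uncolour_def by auto

lemma colouring_at_deleted_vertex: "\<tau> \<in> \<Omega>' \<Longrightarrow> \<tau> v = 0"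
  unfolding proper_colourings_def by auto

lemma update_mem_iff:
  assumes \<tau>: "\<tau> \<in> \<Omega>'"
  shows "\<tau>(v := a) \<in> \<Omega> \<longleftrightarrow> a < k \<and> a \<notin> \<tau> ` N"
proof
  assume \<sigma>: "\<tau>(v := a) \<in> \<Omega>"
  show "a < k \<and> a \<notin> \<tau> ` N"
  proof
    have "(\<tau>(v := a)) v < k" using \<sigma> v unfolding proper_colourings_def by blast
    thus "a < k" by simp
    show "a \<notin> \<tau> ` N"
    proof
      assume "a \<in> \<tau> ` N"
      then obtain u where u: "u \<in> N" "\<tau> u = a" by blast
      hence "u \<in> W" "E v u" "u \<noteq> v" using neighbourhood_subset unfolding neighbourhood_def by auto
      with \<sigma> v u(2) show False unfolding proper_colourings_def by fastforce
    qed
  qed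
next
  assume a: "a < k \<and> a \<notin> \<tau> ` N"
  have edge: "(\<tau>(v := a)) x \<noteq> (\<tau>(v := a)) y" if xy: "x \<in> W" "y \<in> W" "E x y" for x y
  proof (cases "x = v \<or> y = v")
    case True
    then consider "x = v" "y \<in> N" | "y = v" "x \<in> N"
      using xy irrefl sym unfolding neighbourhood_def by blast
    thus ?thesis using a neighbourhood_subset by cases auto
  next
    case False
    thus ?thesis using \<tau> xy unfolding proper_colourings_def by auto
  qed
  show "\<tau>(v := a) \<in> \<Omega>" using \<tau> a edge v unfolding proper_colourings_def by auto
qed

lemma extensions_eq:
  assumes \<tau>: "\<tau> \<in> \<Omega>'"
  shows "extensions \<tau> = (\<lambda>a. \<tau>(v := a)) ` ({..<k} - \<tau> ` N)"
proof (intro equalityI subsetI)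
  fix \<sigma> assume "\<sigma> \<in> extensions \<tau>"
  hence \<sigma>: "\<sigma> \<in> \<Omega>" and "\<sigma> = \<tau>(v := \<sigma> v)" unfolding extensions_def uncolour_def by auto
  thus "\<sigma> \<in> (\<lambda>a. \<tau>(v := a)) ` ({..<k} - \<tau> ` N)" using update_mem_iff[OF \<tau>, of "\<sigma> v"] by auto
next
  fix \<sigma> assume "\<sigma> \<in> (\<lambda>a. \<tau>(v := a)) ` ({..<k} - \<tau> ` N)"
  then obtain a where "a < k" "a \<notin> \<tau> ` N" and \<sigma>: "\<sigma> = \<tau>(v := a)" by auto
  moreover have "uncolour \<sigma> = \<tau>" unfolding \<sigma> uncolour_def using colouring_at_deleted_vertex[OF \<tau>] by auto
  ultimately show "\<sigma> \<in> extensions \<tau>" unfolding extensions_def using update_mem_iff[OF \<tau>] by simp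
qed

lemma card_extensions:
  assumes \<tau>: "\<tau> \<in> \<Omega>'"
  shows "card (extensions \<tau>) = k - card N"
proof -
  \<comment> \<open>the neighbours of \<open>v\<close> form a clique, so they carry distinct colours\<close>
  have "inj_on \<tau> N"
  proof (rule inj_onI)
    fix x y assume "x \<in> N" "y \<in> N" "\<tau> x = \<tau> y"
    thus "x = y" using clique \<tau> neighbourhood_subset
      unfolding is_clique_def proper_colourings_def by blast
  qed
  hence "card (\<tau> ` N) = card N" by (rule card_image)
  moreover have "\<tau> ` N \<subseteq> {..<k}" using \<tau> neighbourhood_subset unfolding proper_colourings_def by auto
  moreover have "inj_on (\<lambda>a. \<tau>(v := a)) X" for X
    by (rule inj_onI) (drule fun_cong[of _ _ v], simp)
  moreover have "finite N" using finite unfolding neighbourhood_def by simp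
  ultimately show ?thesis unfolding extensions_eq[OF \<tau>] by (simp add: card_image card_Diff_subset)
qed

lemma finite_colourings: "finite \<Omega>" "finite \<Omega>'"
  using finite by (simp_all add: finite_proper_colourings)

lemma sum_uncolour: "(\<Sum>\<sigma>\<in>\<Omega>. f (uncolour \<sigma>)) = real (k - card N) * (\<Sum>\<tau>\<in>\<Omega>'. f \<tau> :: real)"
proof -
  have "(\<Sum>\<sigma>\<in>\<Omega>. f (uncolour \<sigma>)) = (\<Sum>\<tau>\<in>\<Omega>'. \<Sum>\<sigma>\<in>extensions \<tau>. f (uncolour \<sigma>))"
    unfolding extensions_def by (rule sum.group[symmetric, OF finite_colourings]) (auto intro: uncolour_mem)
  also have "\<dots> = (\<Sum>\<tau>\<in>\<Omega>'. real (k - card N) * f \<tau>)"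
    using card_extensions by (intro sum.cong refl) (simp add: extensions_def)
  finally show ?thesis by (simp add: sum_distrib_left)
qed

lemma card_colourings: "card \<Omega> = (k - card N) * card \<Omega>'"
  using sum_uncolour[of "\<lambda>_. 1"] by (simp flip: of_nat_mult)

lemma card_deleted_colourings_le: "card \<Omega>' \<le> card \<Omega>"
  unfolding card_colourings using mult_le_mono1[of 1 "k - card N" "card \<Omega>'"] free_colour by linarith

lemma sum_rate_extensions_le:
  assumes p: "\<And>x. x \<in> W \<Longrightarrow> 0 \<le> p x" and \<tau>: "\<tau> \<in> \<Omega>'" and ne: "uncolour \<sigma> \<noteq> \<tau>"
  shows "(\<Sum>\<eta>\<in>extensions \<tau>. glauber_rate p W \<sigma> \<eta>) \<le> glauber_rate p (W - {v}) (uncolour \<sigma>) \<tau>"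
proof -
  define \<eta>\<^sub>0 where "\<eta>\<^sub>0 = \<tau>(v := \<sigma> v)"
  obtain y where y: "uncolour \<sigma> y \<noteq> \<tau> y" using ne by auto
  hence "y \<noteq> v" using colouring_at_deleted_vertex[OF \<tau>] unfolding uncolour_def by auto
  \<comment> \<open>a single Glauber move cannot change both \<open>v\<close> and \<open>y\<close>\<close>
  have "glauber_rate p W \<sigma> \<eta> = 0" if \<eta>: "\<eta> \<in> extensions \<tau>" "\<eta> \<noteq> \<eta>\<^sub>0" for \<eta>
  proof (rule glauber_rate_eq_0_if_two_changes)
    have eq: "\<eta> = \<tau>(v := \<eta> v)" using \<eta>(1) unfolding extensions_def uncolour_def by auto
    show "\<sigma> v \<noteq> \<eta> v"
    proof
      assume "\<sigma> v = \<eta> v"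
      hence "\<eta> = \<eta>\<^sub>0" using eq unfolding \<eta>\<^sub>0_def by simp
      thus False using \<eta>(2) by contradiction
    qed
    show "\<sigma> y \<noteq> \<eta> y" using fun_cong[OF eq, of y] y \<open>y \<noteq> v\<close> unfolding uncolour_def by simp
  qed (use \<open>y \<noteq> v\<close> in simp)
  hence "(\<Sum>\<eta>\<in>extensions \<tau>. glauber_rate p W \<sigma> \<eta>)
      = (\<Sum>\<eta>\<in>extensions \<tau>. if \<eta> = \<eta>\<^sub>0 then glauber_rate p W \<sigma> \<eta>\<^sub>0 else 0)"
    by (intro sum.cong) auto
  also have "\<dots> \<le> glauber_rate p W \<sigma> \<eta>\<^sub>0"
    using finite_colourings(1) glauber_rate_nonneg[OF p] by (simp add: sum.delta' extensions_def)
  also have "\<dots> = glauber_rate p (W - {v}) (uncolour \<sigma>) \<tau>"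
    unfolding \<eta>\<^sub>0_def uncolour_def by (rule glauber_rate_update) (rule colouring_at_deleted_vertex[OF \<tau>])
  finally show ?thesis .
qed

lemma dirichlet_form_uncolour_le:
  assumes p: "\<And>x. x \<in> W \<Longrightarrow> 0 \<le> p x"
  shows "glauber_dirichlet_form p W \<Omega> (\<lambda>\<sigma>. h (uncolour \<sigma>))
           \<le> real (k - card N) * glauber_dirichlet_form p (W - {v}) \<Omega>' h"
proof -
  let ?r = "glauber_rate p W" and ?r' = "glauber_rate p (W - {v})"
  have fibre: "(\<Sum>\<eta>\<in>extensions \<tau>. ?r \<sigma> \<eta> * (h (uncolour \<sigma>) - h (uncolour \<eta>))\<^sup>2)
      \<le> ?r' (uncolour \<sigma>) \<tau> * (h (uncolour \<sigma>) - h \<tau>)\<^sup>2" if \<tau>: "\<tau> \<in> \<Omega>'" for \<sigma> \<tau>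
  proof (cases "uncolour \<sigma> = \<tau>")
    case True
    thus ?thesis using glauber_rate_nonneg[of "W - {v}" p] p by (simp add: extensions_def)
  next
    case False
    have "(\<Sum>\<eta>\<in>extensions \<tau>. ?r \<sigma> \<eta> * (h (uncolour \<sigma>) - h (uncolour \<eta>))\<^sup>2)
        = (\<Sum>\<eta>\<in>extensions \<tau>. ?r \<sigma> \<eta>) * (h (uncolour \<sigma>) - h \<tau>)\<^sup>2"
      by (simp add: sum_distrib_right extensions_def)
    also have "\<dots> \<le> ?r' (uncolour \<sigma>) \<tau> * (h (uncolour \<sigma>) - h \<tau>)\<^sup>2"
      by (intro mult_right_mono sum_rate_extensions_le[OF p \<tau> False]) simp_all
    finally show ?thesis .
  qed
  have "(\<Sum>\<sigma>\<in>\<Omega>. \<Sum>\<eta>\<in>\<Omega>. ?r \<sigma> \<eta> * (h (uncolour \<sigma>) - h (uncolour \<eta>))\<^sup>2)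
      = (\<Sum>\<sigma>\<in>\<Omega>. \<Sum>\<tau>\<in>\<Omega>'. \<Sum>\<eta>\<in>extensions \<tau>. ?r \<sigma> \<eta> * (h (uncolour \<sigma>) - h (uncolour \<eta>))\<^sup>2)"
    unfolding extensions_def
    by (intro sum.cong refl sum.group[symmetric] finite_colourings) (auto intro: uncolour_mem)
  also have "\<dots> \<le> (\<Sum>\<sigma>\<in>\<Omega>. \<Sum>\<tau>\<in>\<Omega>'. ?r' (uncolour \<sigma>) \<tau> * (h (uncolour \<sigma>) - h \<tau>)\<^sup>2)"
    by (intro sum_mono fibre)
  also have "\<dots> = real (k - card N) * (\<Sum>\<tau>'\<in>\<Omega>'. \<Sum>\<tau>\<in>\<Omega>'. ?r' \<tau>' \<tau> * (h \<tau>' - h \<tau>)\<^sup>2)"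
    by (rule sum_uncolour)
  finally show ?thesis unfolding glauber_dirichlet_form_def by simp
qed

lemma glauber_gap_le_deleted:
  assumes p: "\<And>x. x \<in> W \<Longrightarrow> 0 \<le> p x" and card': "2 \<le> card \<Omega>'"
  shows "glauber_gap E W k p \<le> glauber_gap (\<lambda>x y. E x y \<and> x \<noteq> v \<and> y \<noteq> v) (W - {v}) k p"
proof -
  define c where "c = real (k - card N)"
  have c: "0 < c" unfolding c_def using free_colour by simp
  have card: "2 \<le> card \<Omega>" using card_deleted_colourings_le card' by simp
  obtain h where h_sum: "(\<Sum>\<tau>\<in>\<Omega>'. h \<tau>) = 0" and h_nonzero: "\<exists>\<tau>\<in>\<Omega>'. h \<tau> \<noteq> 0"
    and h_bound: "glauber_dirichlet_form p (W - {v}) \<Omega>' h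
      \<le> glauber_gap (\<lambda>x y. E x y \<and> x \<noteq> v \<and> y \<noteq> v) (W - {v}) k p * (\<Sum>\<tau>\<in>\<Omega>'. (h \<tau>)\<^sup>2)"
    using glauber_gap_test_function[OF _ card'] finite by blast
  define F where "F = (\<lambda>\<sigma>. h (uncolour \<sigma>))"
  have F_sum: "(\<Sum>\<sigma>\<in>\<Omega>. F \<sigma>) = 0" unfolding F_def sum_uncolour h_sum by simp
  have F_nonzero: "\<exists>\<sigma>\<in>\<Omega>. F \<sigma> \<noteq> 0"
  proof -
    obtain \<tau> where \<tau>: "\<tau> \<in> \<Omega>'" "h \<tau> \<noteq> 0" using h_nonzero by blast
    hence "extensions \<tau> \<noteq> {}" using card_extensions free_colour by fastforce
    thus ?thesis using \<tau> unfolding F_def extensions_def by auto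
  qed
  have h_pos: "0 < (\<Sum>\<tau>\<in>\<Omega>'. (h \<tau>)\<^sup>2)"
  proof -
    obtain \<tau> where "\<tau> \<in> \<Omega>'" "h \<tau> \<noteq> 0" using h_nonzero by blast
    thus ?thesis using finite_colourings(2) by (intro sum_pos2) auto
  qed
  have "glauber_gap E W k p * (c * (\<Sum>\<tau>\<in>\<Omega>'. (h \<tau>)\<^sup>2)) = glauber_gap E W k p * (\<Sum>\<sigma>\<in>\<Omega>. (F \<sigma>)\<^sup>2)"
    unfolding F_def c_def using sum_uncolour[of "\<lambda>\<tau>. (h \<tau>)\<^sup>2"] by simp
  also have "\<dots> \<le> glauber_dirichlet_form p W \<Omega> F"
    by (rule glauber_gap_le_Dirichlet_form[OF finite p card F_sum F_nonzero])
  also have "\<dots> \<le> c * glauber_dirichlet_form p (W - {v}) \<Omega>' h"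
    unfolding F_def c_def by (rule dirichlet_form_uncolour_le[OF p])
  also have "\<dots> \<le> glauber_gap (\<lambda>x y. E x y \<and> x \<noteq> v \<and> y \<noteq> v) (W - {v}) k p * (c * (\<Sum>\<tau>\<in>\<Omega>'. (h \<tau>)\<^sup>2))"
    using mult_left_mono[OF h_bound, of c] c by (simp add: mult_ac)
  finally show ?thesis using c h_pos by (simp add: mult_le_cancel_right_pos)
qed

end

theorem proposition9:
  fixes n k v :: nat and E :: "nat \<Rightarrow> nat \<Rightarrow> bool" and p :: "nat \<Rightarrow> real"
  assumes sym: "\<And>x y. E x y \<Longrightarrow> E y x"
    and irrefl: "\<And>x. \<not> E x x"
    and in_V: "\<And>x y. E x y \<Longrightarrow> x < n \<and> y < n"
    and k_pos: "0 < k"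
    and v_in: "v < n"
    and clique: "is_clique E (neighbourhood E {0..<n} v)"
    and clique_size: "card (neighbourhood E {0..<n} v) + 2 \<le> k"
    and p_pos: "\<And>i. i < n \<Longrightarrow> 0 < p i"
  shows "relaxation_time (\<lambda>x y. E x y \<and> x \<noteq> v \<and> y \<noteq> v) ({0..<n} - {v}) k p
           \<le> relaxation_time E {0..<n} k p"
proof -
  \<comment> \<open>the argument only needs \<open>|N(v)| < k\<close>\<close>
  interpret simplicial_vertex E "{0..<n}" k v
    using sym irrefl v_in clique clique_size by unfold_locales auto
  have p: "\<And>x. x \<in> {0..<n} \<Longrightarrow> 0 \<le> p x" using p_pos by (simp add: less_imp_le)
  show ?thesis
    using card_deleted_colourings_le glauber_gap_le_deleted[OF p]
    by (intro relaxation_time_le_of_gap_le[OF finite p]) auto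
qed

end
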